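(* Fix a real number $m\ge1$. There is a positive constant $C$ (depending only on $m$ and $r$) such that for all $N\ge1$ and all $1\le k\le N$, $$E\big[X_{k,N}^m\big]\le\Big(\frac kN\Big)^{mr}\Big(1+\frac Ck\Big).$$
   Context: Fix $r\in(0,1)$. Multitype Yule process: at time $0$ a single individual of type $1$ is born; no deaths; each individual independently gives birth at rate $1$; a newborn has, independently, its parent's type with probability $1-r$ and otherwise a brand-new type. Individuals are numbered in order of birth (the initial one is the 1st); if the $k$-th individual born has a type different from its parent, that type is called type $k$. $T_N$ is the time the population reaches size $N$; $X_{k,N}$ is the fraction of individuals at time $T_N$ with type in $\{1,\dots,k\}$. *)

theory Defs
  imports "HOL-Probability.Probability"
begin

text \<open>Embedded jump chain of the multitype Yule process.  A state is the list of types
  of the individuals in birth order (entry i-1 is the type of the i-th individual).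
  Given n individuals, the next birth comes from a uniformly chosen parent
  (all individuals reproduce at rate 1); the newborn (individual n+1) keeps the
  parent's type with probability 1-r and otherwise receives the new type n+1.\<close>

definition yule_step :: "real \<Rightarrow> nat list \<Rightarrow> nat list pmf" where
  "yule_step r ts =
     bind_pmf (pmf_of_set {..<length ts}) (\<lambda>j.
     bind_pmf (bernoulli_pmf r) (\<lambda>mut.
       return_pmf (ts @ [if mut then Suc (length ts) else ts ! j])))"

text \<open>Population at time T_(n+1), i.e. when the size first reaches n+1.\<close>
primrec yule_pop :: "real \<Rightarrow> nat \<Rightarrow> nat list pmf" where
  "yule_pop r 0 = return_pmf [1]"
| "yule_pop r (Suc n) = bind_pmf (yule_pop r n) (yule_step r)"

definition frac_types :: "nat \<Rightarrow> nat list \<Rightarrow> real" where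
  "frac_types k ts = real (card {i. i < length ts \<and> 1 \<le> ts ! i \<and> ts ! i \<le> k}) / real (length ts)"

definition moment_X :: "real \<Rightarrow> real \<Rightarrow> nat \<Rightarrow> nat \<Rightarrow> real" where
  "moment_X r m k N = measure_pmf.expectation (yule_pop r (N - 1)) (\<lambda>ts. frac_types k ts powr m)"

end

theory Submission
  imports Defs
begin

text \<open>
  Let c be the number of individuals with type in {1..k}; at population size k it equals k.
  At size n the next birth copies the type of such an individual with probability (1 - r) c / n,
  so the urn weight w(c) = prod_{1 <= j < c} (1 + m/j), which satisfies w(c+1) = w(c) (1 + m/c),
  grows in conditional expectation by the factor 1 + (1 - r) m / n. Bernoulli's inequality gives
  (c/N)^m <= w(c) / w(N), hence E[X^m] <= prod_{k <= L < N} (1 + (1 - r) m/L) / (1 + m/L).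
  Comparing logarithms, each factor is at most (L/(L+1))^(mr) exp(2 m^2 (1/L - 1/(L+1))); the
  product telescopes to (k/N)^(mr) exp(2 m^2 (1/k - 1/N)), and exp(2 m^2/k) <= 1 + C/k.
\<close>

lemma Bernoulli_inequality_powr:
  fixes x m :: real
  assumes "0 \<le> x" "1 \<le> m"
  shows "1 + m * x \<le> (1 + x) powr m"
proof -
  define g where "g t = (1 + t) powr m - m * t" for t :: real
  have deriv: "(g has_real_derivative m * (1 + t) powr (m - 1) - m) (at t)" if "0 \<le> t" for t
    unfolding g_def using that by (auto intro!: derivative_eq_intros)
  have nonneg: "0 \<le> m * (1 + t) powr (m - 1) - m" if "0 \<le> t" for t
    using that assms by (simp add: ge_one_powr_ge_zero mult_le_cancel_left1)
  have "g 0 \<le> g x"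
    by (rule DERIV_nonneg_imp_nondecreasing[OF assms(1)]) (use deriv nonneg in blast)
  then show ?thesis by (simp add: g_def)
qed

lemma powr_mult_one_plus_le_powr:
  fixes a m :: real
  assumes "0 < a" "1 \<le> m"
  shows "a powr m * (1 + m / a) \<le> (a + 1) powr m"
proof -
  have "a powr m * (1 + m * (1 / a)) \<le> a powr m * (1 + 1 / a) powr m"
    using assms by (intro mult_left_mono Bernoulli_inequality_powr) auto
  also have "\<dots> = (a * (1 + 1 / a)) powr m"
    using assms by (simp add: powr_mult)
  also have "a * (1 + 1 / a) = a + 1"
    using assms by (simp add: field_simps)
  finally show ?thesis by simp
qed

lemma exp_le_one_plus_mult_exp:
  fixes y b :: real
  assumes "0 \<le> y" "y \<le> b"
  shows "exp y \<le> 1 + y * exp b"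
proof -
  have "(1 - y) * exp y \<le> exp (- y) * exp y"
    using exp_ge_add_one_self[of "- y"] by (intro mult_right_mono) auto
  then have "exp y \<le> 1 + y * exp y" by (simp add: exp_minus algebra_simps)
  also have "y * exp y \<le> y * exp b" using assms by (intro mult_left_mono) auto
  finally show ?thesis by simp
qed

lemma ln_one_plus_nonneg_lower_bound:
  fixes y :: real
  assumes "0 \<le> y"
  shows "y - y\<^sup>2 \<le> ln (1 + y)"
proof (cases "y \<le> 1")
  case True
  then show ?thesis using ln_one_plus_pos_lower_bound assms by simp
next
  case False
  then have "y - y\<^sup>2 \<le> 0" by (simp add: power2_eq_square)
  also have "0 \<le> ln (1 + y)" using assms by simp
  finally show ?thesis .
qed

lemma inverse_square_le_telescoping:
  fixes L :: nat
  assumes "1 \<le> L"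
  shows "(1 / L)\<^sup>2 \<le> 2 * (1 / L - 1 / Suc L)"
proof -
  have "real L * (L + 1) \<le> real L * (2 * L)" "0 < real L * (L + 1)"
    using assms by (intro mult_left_mono, auto)
  then show ?thesis
    using assms by (simp add: power2_eq_square divide_simps algebra_simps)
qed

lemma urn_factor_le:
  fixes m r :: real and L :: nat
  assumes "0 \<le> r" "r \<le> 1" "0 \<le> m" "1 \<le> L"
  shows "(1 + (1 - r) * m / L) / (1 + m / L)
     \<le> (L / Suc L) powr (m * r) * exp (2 * m\<^sup>2 * (1 / L - 1 / Suc L))"
proof -
  define x :: real where "x = 1 / L"
  have x: "0 < x" using assms by (simp add: x_def)
  have "x\<^sup>2 \<le> 2 * (1 / L - 1 / Suc L)"
    using inverse_square_le_telescoping assms by (simp add: x_def)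
  then have sq: "m\<^sup>2 * x\<^sup>2 \<le> m\<^sup>2 * (2 * (1 / L - 1 / Suc L))"
    by (rule mult_left_mono) simp
  have num: "ln (1 + (1 - r) * m * x) \<le> (1 - r) * m * x"
    using x assms by (intro ln_add_one_self_le_self) simp
  have den: "m * x - m\<^sup>2 * x\<^sup>2 \<le> ln (1 + m * x)"
    using ln_one_plus_nonneg_lower_bound[of "m * x"] x assms by (simp add: power_mult_distrib)
  have ln_x: "m * r * ln (1 + x) \<le> m * r * x"
    using x assms by (intro mult_left_mono ln_add_one_self_le_self) auto
  have log_le: "ln (1 + (1 - r) * m * x) - ln (1 + m * x)
      \<le> - (m * r) * ln (1 + x) + 2 * m\<^sup>2 * (1 / L - 1 / Suc L)"
  proof -
    have "(1 - r) * m * x = m * x - m * r * x" "- (m * r) * ln (1 + x) = - (m * r * ln (1 + x))"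
      "m\<^sup>2 * (2 * (1 / L - 1 / Suc L)) = 2 * m\<^sup>2 * (1 / L - 1 / Suc L)"
      by (simp_all add: algebra_simps)
    with sq num den ln_x show ?thesis by (smt (verit))
  qed
  have powr_eq: "(L / Suc L) powr (m * r) = exp (- (m * r) * ln (1 + x))"
    using x assms by (simp add: powr_def x_def field_simps ln_div)
  have "(1 + (1 - r) * m / L) / (1 + m / L) = exp (ln (1 + (1 - r) * m * x) - ln (1 + m * x))"
  proof -
    have "0 < 1 + (1 - r) * m * x" "0 < 1 + m * x"
      using x assms by (simp_all add: add_pos_nonneg)
    then show ?thesis by (simp add: exp_diff x_def)
  qed
  also have "\<dots> \<le> exp (- (m * r) * ln (1 + x) + 2 * m\<^sup>2 * (1 / L - 1 / Suc L))"
    using log_le by simp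
  also have "\<dots> = (L / Suc L) powr (m * r) * exp (2 * m\<^sup>2 * (1 / L - 1 / Suc L))"
    unfolding exp_add powr_eq ..
  finally show ?thesis .
qed

lemma prod_urn_factor_le:
  fixes m r :: real and k N :: nat
  assumes "0 \<le> r" "r \<le> 1" "0 \<le> m" "1 \<le> k" "k \<le> N"
  shows "(\<Prod>L\<in>{k..<N}. (1 + (1 - r) * m / L) / (1 + m / L))
     \<le> (k / N) powr (m * r) * exp (2 * m\<^sup>2 * (1 / k - 1 / N))"
proof -
  have "(\<Prod>L\<in>{k..<N}. (1 + (1 - r) * m / L) / (1 + m / L))
      \<le> (\<Prod>L\<in>{k..<N}. (L / Suc L) powr (m * r) * exp (2 * m\<^sup>2 * (1 / L - 1 / Suc L)))"
    using assms by (intro prod_mono conjI urn_factor_le) auto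
  also have "\<dots> = (\<Prod>L\<in>{k..<N}. real L / Suc L) powr (m * r)
      * exp (2 * m\<^sup>2 * (\<Sum>L\<in>{k..<N}. 1 / L - 1 / Suc L))"
    by (simp add: prod.distrib prod_powr_distrib exp_sum sum_distrib_left)
  also have "(\<Prod>L\<in>{k..<N}. real L / Suc L) = k / N"
    using assms(5,4) by (induction N rule: dec_induct) (auto simp: prod.op_ivl_Suc)
  also have "(\<Sum>L\<in>{k..<N}. 1 / real L - 1 / Suc L) = 1 / k - 1 / N"
    using sum_Suc_diff'[OF assms(5), of "\<lambda>L. - 1 / real L"] by simp
  finally show ?thesis .
qed

text \<open>For c >= 1 this is Gamma(c + m) / (Gamma(c) Gamma(1 + m)). The junk value m / 0 = 0
  makes the recurrence urn_weight_Suc hold at c = 0 as well.\<close>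
definition urn_weight :: "real \<Rightarrow> nat \<Rightarrow> real" where
  "urn_weight m c = (\<Prod>j\<in>{1..<c}. 1 + m / real j)"

lemma urn_weight_Suc: "urn_weight m (Suc c) = urn_weight m c * (1 + m / c)"
  by (simp add: urn_weight_def prod.op_ivl_Suc)

lemma urn_weight_pos: "0 \<le> m \<Longrightarrow> 0 < urn_weight m c"
  unfolding urn_weight_def by (intro prod_pos) (simp add: add_pos_nonneg)

lemma urn_weight_split:
  "k \<le> N \<Longrightarrow> urn_weight m N = urn_weight m k * (\<Prod>L\<in>{k..<N}. 1 + m / real L)"
  by (induction N rule: dec_induct) (simp_all add: urn_weight_Suc prod.op_ivl_Suc)

lemma powr_div_urn_weight_mono:
  assumes "1 \<le> m" "1 \<le> a" "a \<le> b"
  shows "real a powr m / urn_weight m a \<le> real b powr m / urn_weight m b"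
  using assms(3)
proof (induction b rule: dec_induct)
  case (step n)
  have n: "1 \<le> n" using step.hyps assms by simp
  have pos: "0 < urn_weight m n" "0 < 1 + m / n"
    using urn_weight_pos[of m n] assms by (simp_all add: add_pos_nonneg)
  have "real n powr m / urn_weight m n = real n powr m * (1 + m / n) / urn_weight m (Suc n)"
    using pos by (simp add: urn_weight_Suc)
  also have "\<dots> \<le> real (Suc n) powr m / urn_weight m (Suc n)"
    using powr_mult_one_plus_le_powr[of n m] n pos assms
    by (intro divide_right_mono) (simp_all add: add.commute urn_weight_Suc)
  finally show ?case using step.IH by linarith
qed simp

lemma ratio_powr_le_urn_weight:
  assumes "1 \<le> m" "c \<le> N"
  shows "(real c / N) powr m \<le> urn_weight m c / urn_weight m N"
proof (cases "c = 0")
  case True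
  then show ?thesis using urn_weight_pos[of m] assms by (simp add: less_imp_le)
next
  case False
  then have "real c powr m / urn_weight m c \<le> real N powr m / urn_weight m N"
    using powr_div_urn_weight_mono assms by simp
  then show ?thesis
    using urn_weight_pos[of m] False assms by (simp add: powr_divide field_simps)
qed

lemma expectation_bind_pmf_finite:
  fixes h :: "'b \<Rightarrow> real"
  assumes "finite (set_pmf p)" "\<And>x. x \<in> set_pmf p \<Longrightarrow> finite (set_pmf (f x))"
  shows "measure_pmf.expectation (bind_pmf p f) h
       = measure_pmf.expectation p (\<lambda>x. measure_pmf.expectation (f x) h)"
  using assms
  by (simp add: pmf_expectation_bind[of "set_pmf p"] integral_measure_pmf[of "set_pmf p"])

lemma expectation_mono_pmf_finite:
  fixes f g :: "'a \<Rightarrow> real"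
  assumes "finite (set_pmf p)" "\<And>x. x \<in> set_pmf p \<Longrightarrow> f x \<le> g x"
  shows "measure_pmf.expectation p f \<le> measure_pmf.expectation p g"
  using assms by (intro integral_mono_AE integrable_measure_pmf_finite AE_pmfI)

lemma expectation_pmf_const_on_support:
  fixes f :: "'a \<Rightarrow> real"
  assumes "\<And>x. x \<in> set_pmf p \<Longrightarrow> f x = c"
  shows "measure_pmf.expectation p f = c"
proof -
  have "measure_pmf.expectation p f = measure_pmf.expectation p (\<lambda>_. c)"
    using assms by (intro integral_cong_AE) (auto intro: AE_pmfI)
  then show ?thesis by simp
qed

definition count_upto :: "nat \<Rightarrow> nat list \<Rightarrow> nat" where
  "count_upto k ts = length (filter (\<lambda>t. t \<in> {1..k}) ts)"

lemma frac_types_eq: "frac_types k ts = count_upto k ts / length ts"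
  by (simp add: frac_types_def count_upto_def length_filter_conv_card)

lemma count_upto_le_length: "count_upto k ts \<le> length ts"
  by (simp add: count_upto_def)

lemma count_upto_snoc [simp]:
  "count_upto k (ts @ [t]) = count_upto k ts + (if t \<in> {1..k} then 1 else 0)"
  by (simp add: count_upto_def)

lemma set_pmf_yule_step:
  "ts \<noteq> [] \<Longrightarrow> set_pmf (yule_step r ts) \<subseteq> (\<lambda>t. ts @ [t]) ` insert (Suc (length ts)) (set ts)"
  by (auto simp: yule_step_def set_pmf_of_set lessThan_empty_iff split: if_splits)

lemma finite_set_pmf_yule_step:
  assumes "ts \<noteq> []"
  shows "finite (set_pmf (yule_step r ts))"
  by (rule finite_subset[OF set_pmf_yule_step[OF assms]]) auto

lemma set_pmf_yule_pop:
  "ts \<in> set_pmf (yule_pop r n) \<Longrightarrow> length ts = Suc n \<and> set ts \<subseteq> {1..Suc n}"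
proof (induction n arbitrary: ts)
  case (Suc n)
  then obtain ts0 where ts0: "ts0 \<in> set_pmf (yule_pop r n)" "ts \<in> set_pmf (yule_step r ts0)"
    by auto
  with Suc.IH have "length ts0 = Suc n" "set ts0 \<subseteq> {1..Suc n}" by auto
  with set_pmf_yule_step[of ts0 r] ts0(2) show ?case by fastforce
qed simp

lemma finite_set_pmf_yule_pop: "finite (set_pmf (yule_pop r n))"
proof (rule finite_subset)
  show "set_pmf (yule_pop r n) \<subseteq> {ts. set ts \<subseteq> {1..Suc n} \<and> length ts = Suc n}"
    using set_pmf_yule_pop by blast
qed (rule finite_lists_length_eq, simp)

lemma count_upto_yule_pop:
  assumes "ts \<in> set_pmf (yule_pop r n)"
  shows "count_upto (Suc n) ts = Suc n"
proof -
  have "filter (\<lambda>t. t \<in> {1..Suc n}) ts = ts"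
    using set_pmf_yule_pop[OF assms] by (intro filter_True) auto
  then show ?thesis using set_pmf_yule_pop[OF assms] by (simp add: count_upto_def)
qed

lemma expectation_urn_weight_yule_step:
  assumes "ts \<noteq> []" "k \<le> length ts" "0 \<le> m" "0 \<le> r" "r \<le> 1"
  shows "measure_pmf.expectation (yule_step r ts) (\<lambda>ts'. urn_weight m (count_upto k ts'))
       \<le> urn_weight m (count_upto k ts) * (1 + (1 - r) * m / length ts)"
proof -
  define L where "L = length ts"
  define c where "c = count_upto k ts"
  define w where "w = urn_weight m c"
  define gain where "gain j = (if ts ! j \<in> {1..k} then w * m / c else 0)" for j
  have L: "0 < L" using assms by (simp add: L_def)
  have w: "0 < w" using urn_weight_pos assms by (simp add: w_def)
  have parent: "measure_pmf.expectation (bernoulli_pmf r \<bind>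
        (\<lambda>mut. return_pmf (ts @ [if mut then Suc L else ts ! j]))) (\<lambda>ts'. urn_weight m (count_upto k ts'))
      = w + (1 - r) * gain j" for j
    using assms
    by (subst expectation_bind_pmf_finite)
       (auto simp: L_def c_def w_def gain_def urn_weight_Suc algebra_simps)
  have gain_sum: "(\<Sum>j<L. gain j) = w * m / c * c"
  proof -
    have "(\<Sum>j<L. gain j) = w * m / c * card {j. j < L \<and> ts ! j \<in> {1..k}}"
      by (simp add: gain_def sum.If_cases Int_def)
    also have "card {j. j < L \<and> ts ! j \<in> {1..k}} = c"
      by (simp add: L_def c_def count_upto_def length_filter_conv_card)
    finally show ?thesis .
  qed
  have "measure_pmf.expectation (yule_step r ts) (\<lambda>ts'. urn_weight m (count_upto k ts'))
      = (\<Sum>j<L. w + (1 - r) * gain j) / L"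
    unfolding yule_step_def using assms L
    by (subst pmf_expectation_bind_pmf_of_set)
       (auto simp: parent[unfolded L_def] L_def divide_inverse_commute sum_distrib_left)
  also have "\<dots> = (L * w + (1 - r) * (w * m / c * c)) / L"
    by (simp add: sum.distrib sum_distrib_left[symmetric] gain_sum)
  also have "\<dots> \<le> (L * w + (1 - r) * (w * m)) / L" \<comment> \<open>equality unless c = 0, where m / c = 0\<close>
    using w assms by (intro divide_right_mono add_left_mono mult_left_mono) (cases "c = 0", auto)
  also have "\<dots> = w * (1 + (1 - r) * m / L)"
    using L by (simp add: field_simps)
  finally show ?thesis by (simp add: L_def c_def w_def)
qed

lemma expectation_urn_weight_yule_pop:
  assumes "0 \<le> m" "0 \<le> r" "r \<le> 1" "1 \<le> k" "k \<le> Suc n"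
  shows "measure_pmf.expectation (yule_pop r n) (\<lambda>ts. urn_weight m (count_upto k ts))
       \<le> urn_weight m k * (\<Prod>L\<in>{k..<Suc n}. 1 + (1 - r) * m / L)"
proof -
  have "k - 1 \<le> n" using assms by simp
  then show ?thesis
  proof (induction n rule: dec_induct)
    case base
    have "measure_pmf.expectation (yule_pop r (k - 1)) (\<lambda>ts. urn_weight m (count_upto k ts))
        = urn_weight m k"
      using count_upto_yule_pop[of _ r "k - 1"] assms
      by (intro expectation_pmf_const_on_support) simp
    then show ?case using assms by simp
  next
    case (step j)
    define F where "F = 1 + (1 - r) * m / Suc j"
    have k: "k \<le> Suc j" using step.hyps by simp
    have len: "length ts = Suc j" and nonempty: "ts \<noteq> []" if "ts \<in> set_pmf (yule_pop r j)" for ts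
      using set_pmf_yule_pop[OF that] by auto
    have "measure_pmf.expectation (yule_pop r (Suc j)) (\<lambda>ts. urn_weight m (count_upto k ts))
        = measure_pmf.expectation (yule_pop r j)
            (\<lambda>ts. measure_pmf.expectation (yule_step r ts) (\<lambda>ts'. urn_weight m (count_upto k ts')))"
      unfolding yule_pop.simps
      by (intro expectation_bind_pmf_finite finite_set_pmf_yule_pop finite_set_pmf_yule_step nonempty)
    also have "\<dots> \<le> measure_pmf.expectation (yule_pop r j) (\<lambda>ts. urn_weight m (count_upto k ts) * F)"
    proof (rule expectation_mono_pmf_finite[OF finite_set_pmf_yule_pop])
      fix ts assume ts: "ts \<in> set_pmf (yule_pop r j)"
      show "measure_pmf.expectation (yule_step r ts) (\<lambda>ts'. urn_weight m (count_upto k ts'))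
          \<le> urn_weight m (count_upto k ts) * F"
        using expectation_urn_weight_yule_step[OF nonempty[OF ts]] len[OF ts] k assms
        by (simp add: F_def)
    qed
    also have "\<dots> = measure_pmf.expectation (yule_pop r j) (\<lambda>ts. urn_weight m (count_upto k ts)) * F"
      by simp
    also have "\<dots> \<le> urn_weight m k * (\<Prod>L\<in>{k..<Suc j}. 1 + (1 - r) * m / L) * F"
      using step.IH assms by (intro mult_right_mono) (auto simp: F_def)
    also have "\<dots> = urn_weight m k * (\<Prod>L\<in>{k..<Suc (Suc j)}. 1 + (1 - r) * m / L)"
      using k by (simp add: F_def prod.op_ivl_Suc)
    finally show ?case .
  qed
qed

lemma moment_X_le_prod:
  fixes k N :: nat
  assumes "0 \<le> r" "r \<le> 1" "1 \<le> m" "1 \<le> k" "k \<le> N"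
  shows "moment_X r m k N \<le> (\<Prod>L\<in>{k..<N}. (1 + (1 - r) * m / L) / (1 + m / L))"
proof -
  define n where "n = N - 1"
  have N: "N = Suc n" using assms by (simp add: n_def)
  have w: "0 < urn_weight m k" "0 < urn_weight m N" using urn_weight_pos assms by auto
  have "moment_X r m k N
      \<le> measure_pmf.expectation (yule_pop r n) (\<lambda>ts. urn_weight m (count_upto k ts) / urn_weight m N)"
    unfolding moment_X_def n_def[symmetric]
  proof (intro expectation_mono_pmf_finite finite_set_pmf_yule_pop)
    fix ts assume "ts \<in> set_pmf (yule_pop r n)"
    then have "length ts = N" using set_pmf_yule_pop N by blast
    then show "frac_types k ts powr m \<le> urn_weight m (count_upto k ts) / urn_weight m N"
      using ratio_powr_le_urn_weight[OF assms(3) count_upto_le_length[of k ts]]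
      by (simp add: frac_types_eq)
  qed
  also have "\<dots> = measure_pmf.expectation (yule_pop r n) (\<lambda>ts. urn_weight m (count_upto k ts))
      / urn_weight m N"
    by simp
  also have "\<dots> \<le> urn_weight m k * (\<Prod>L\<in>{k..<N}. 1 + (1 - r) * m / L) / urn_weight m N"
    using expectation_urn_weight_yule_pop[of m r k n] w assms N
    by (intro divide_right_mono) auto
  also have "\<dots> = (\<Prod>L\<in>{k..<N}. (1 + (1 - r) * m / L) / (1 + m / L))"
    using urn_weight_split[OF assms(5), of m] w by (simp add: prod_dividef)
  finally show ?thesis .
qed

theorem lemma4p2:
  fixes r m :: real
  assumes "0 < r" and "r < 1" and "1 \<le> m"
  shows "\<exists>C>0. \<forall>N k::nat. 1 \<le> k \<longrightarrow> k \<le> N \<longrightarrow>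
           moment_X r m k N \<le> (real k / real N) powr (m * r) * (1 + C / real k)"
proof -
  define C where "C = 2 * m\<^sup>2 * exp (2 * m\<^sup>2)"
  have "moment_X r m k N \<le> (real k / real N) powr (m * r) * (1 + C / real k)"
    if k: "1 \<le> k" "k \<le> N" for N k :: nat
  proof -
    have "exp (2 * m\<^sup>2 * (1 / k - 1 / N)) \<le> exp (2 * m\<^sup>2 / k)"
      by (simp add: right_diff_distrib)
    also have "\<dots> \<le> 1 + 2 * m\<^sup>2 / k * exp (2 * m\<^sup>2)"
      using k by (intro exp_le_one_plus_mult_exp) (simp_all add: field_simps mult_le_cancel_right1)
    finally have "exp (2 * m\<^sup>2 * (1 / k - 1 / N)) \<le> 1 + C / k"
      by (simp add: C_def)
    moreover have "moment_X r m k N \<le> (k / N) powr (m * r) * exp (2 * m\<^sup>2 * (1 / k - 1 / N))"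
      using moment_X_le_prod prod_urn_factor_le assms k by (meson order.trans less_imp_le)
    ultimately show ?thesis
      by (meson mult_left_mono order.trans powr_ge_zero)
  qed
  moreover have "0 < C" using assms by (simp add: C_def)
  ultimately show ?thesis by blast
qed

end
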